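(* Let $\mu$ be a log-concave probability measure on $\mathbb R^n$ and let $\psi:\mathbb R^n\to\mathbb R$ be a convex map with $\psi\in L_1(\mu)$. Let $Z\sim\mu$, $F(t)=\mathbb P(\psi(Z)\leqslant t)$, $t\in\mathbb R$, and $f=F'$. Then $$f(m)\geqslant\frac{1}{32\,\|(\psi-m)_+\|_{L_1(\mu)}},$$ where $m$ is a median of $\psi$ with respect to $\mu$.
   Context: $(x)_+=\max\{x,0\}$. *)

theory Defs
  imports "HOL-Probability.Probability"
begin

text \<open>Compact sets are used so
  that the Minkowski combination is Borel; by inner regularity this is equivalent to the
  usual definition with inner measure on Borel sets.\<close>
definition log_concave_measure :: "'a::euclidean_space measure \<Rightarrow> bool" where
  "log_concave_measure M \<longleftrightarrow>
     sets M = sets borel \<and>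
     (\<forall>A B t. compact A \<longrightarrow> compact B \<longrightarrow> A \<noteq> {} \<longrightarrow> B \<noteq> {} \<longrightarrow> 0 < t \<longrightarrow> t < 1 \<longrightarrow>
        measure M {t *\<^sub>R a + (1 - t) *\<^sub>R b | a b. a \<in> A \<and> b \<in> B}
          \<ge> measure M A powr t * measure M B powr (1 - t))"

definition is_median :: "'a measure \<Rightarrow> ('a \<Rightarrow> real) \<Rightarrow> real \<Rightarrow> bool" where
  "is_median M g m \<longleftrightarrow>
     measure M {x \<in> space M. g x \<le> m} \<ge> 1/2 \<and> measure M {x \<in> space M. g x \<ge> m} \<ge> 1/2"

end

theory Submission
  imports Defs
begin

text \<open>Convexity of \<psi> puts the Minkowski combination of two sublevel sets into a sublevel
  set, so log-concavity of \<mu> makes \<open>F\<close> log-concave. With \<open>F m = 1/2\<close> and, by Markov's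
  inequality, \<open>F (m + 4E) \<ge> 3/4\<close> where \<open>E = \<parallel>(\<psi> - m)\<^sub>+\<parallel>\<^sub>1\<close>, log-concavity gives
  \<open>F (m + h) \<ge> (1/2) (3/2)\<^bsup>h/4E\<^esup> \<ge> 1/2 + h/(32E)\<close> for \<open>0 < h < 4E\<close>;
  letting \<open>h \<rightarrow> 0\<close> bounds the derivative.\<close>

lemma log_concave_measure_closed:
  fixes M :: "'a::euclidean_space measure"
  assumes "finite_measure M" and LC: "log_concave_measure M"
    and "closed A" "closed B" and A: "measure M A > 0" and B: "measure M B > 0"
    and t: "0 < t" "t < 1"
    and C: "C \<in> sets M" and sub: "{t *\<^sub>R a + (1 - t) *\<^sub>R b | a b. a \<in> A \<and> b \<in> B} \<subseteq> C"
  shows "measure M A powr t * measure M B powr (1 - t) \<le> measure M C"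
proof -
  interpret finite_measure M by fact
  have sets: "sets M = sets borel" using LC unfolding log_concave_measure_def by blast
  define K where "K S n = S \<inter> cball 0 (real n)" for S :: "'a set" and n
  have compact_K: "compact (K S n)" if "closed S" for S n
    unfolding K_def using that by (intro closed_Int_compact compact_cball)
  have lim_K: "(\<lambda>n. measure M (K S n)) \<longlonglongrightarrow> measure M S" if "closed S" for S
  proof -
    have "(\<lambda>n. measure M (K S n)) \<longlonglongrightarrow> measure M (\<Union>n. K S n)"
    proof (rule finite_Lim_measure_incseq)
      show "range (K S) \<subseteq> sets M"
        using compact_K[OF that] sets by (auto simp: borel_closed compact_imp_closed)
      show "incseq (K S)" unfolding incseq_def K_def by auto
    qed
    moreover have "(\<Union>n. K S n) = S" by (auto simp: K_def real_arch_simple)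
    ultimately show ?thesis by simp
  qed
  have nonempty_K: "eventually (\<lambda>n. K S n \<noteq> {}) sequentially" if "measure M S > 0" for S
  proof -
    from that obtain x where "x \<in> S" by (metis all_not_in_conv less_irrefl measure_empty)
    moreover obtain N :: nat where "norm x \<le> real N" using real_arch_simple by blast
    ultimately show ?thesis
      unfolding eventually_sequentially K_def
      by (intro exI[of _ N] allI impI) (auto intro: order_trans[of _ "real N"])
  qed
  have "eventually (\<lambda>n. measure M (K A n) powr t * measure M (K B n) powr (1 - t)
      \<le> measure M C) sequentially"
    using nonempty_K[OF A] nonempty_K[OF B]
  proof eventually_elim
    case (elim n)
    have "measure M (K A n) powr t * measure M (K B n) powr (1 - t)
        \<le> measure M {t *\<^sub>R a + (1 - t) *\<^sub>R b | a b. a \<in> K A n \<and> b \<in> K B n}"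
      using LC elim t compact_K \<open>closed A\<close> \<open>closed B\<close>
      unfolding log_concave_measure_def by blast
    also have "\<dots> \<le> measure M C"
      using sub by (intro finite_measure_mono C) (auto simp: K_def)
    finally show ?case .
  qed
  moreover have "(\<lambda>n. measure M (K A n) powr t * measure M (K B n) powr (1 - t))
      \<longlonglongrightarrow> measure M A powr t * measure M B powr (1 - t)"
    using A B \<open>closed A\<close> \<open>closed B\<close> by (intro tendsto_mult tendsto_powr lim_K tendsto_const) auto
  ultimately show ?thesis by (intro tendsto_le[OF _ tendsto_const]) auto
qed

lemma log_concave_sublevel_measure:
  fixes M :: "'a::euclidean_space measure" and \<psi> :: "'a \<Rightarrow> real"
  assumes "finite_measure M" and LC: "log_concave_measure M" and cv: "convex_on UNIV \<psi>"
    and t: "0 < t" "t < 1"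
    and "measure M {x. \<psi> x \<le> a} > 0" and "measure M {x. \<psi> x \<le> b} > 0"
  shows "measure M {x. \<psi> x \<le> a} powr t * measure M {x. \<psi> x \<le> b} powr (1 - t)
      \<le> measure M {x. \<psi> x \<le> t * a + (1 - t) * b}"
proof (rule log_concave_measure_closed[OF assms(1,2) _ _ assms(6,7) t])
  have cont: "continuous_on UNIV \<psi>" using convex_on_continuous[OF open_UNIV cv] .
  have closed: "closed {x. \<psi> x \<le> r}" for r
    by (rule closed_Collect_le[OF cont continuous_on_const])
  show "closed {x. \<psi> x \<le> a}" "closed {x. \<psi> x \<le> b}" by (fact closed)+
  show "{x. \<psi> x \<le> t * a + (1 - t) * b} \<in> sets M"
    using LC closed unfolding log_concave_measure_def by (simp add: borel_closed)
  show "{t *\<^sub>R u + (1 - t) *\<^sub>R v | u v. u \<in> {x. \<psi> x \<le> a} \<and> v \<in> {x. \<psi> x \<le> b}}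
      \<subseteq> {x. \<psi> x \<le> t * a + (1 - t) * b}"
  proof clarify
    fix u v assume "\<psi> u \<le> a" "\<psi> v \<le> b"
    have "\<psi> (t *\<^sub>R u + (1 - t) *\<^sub>R v) \<le> t * \<psi> u + (1 - t) * \<psi> v"
      using convex_onD[OF cv, of "1 - t" u v] t by simp
    also have "\<dots> \<le> t * a + (1 - t) * b"
      using \<open>\<psi> u \<le> a\<close> \<open>\<psi> v \<le> b\<close> t by (intro add_mono mult_left_mono) auto
    finally show "\<psi> (t *\<^sub>R u + (1 - t) *\<^sub>R v) \<le> t * a + (1 - t) * b" .
  qed
qed

lemma (in prob_space) cdf_at_median:
  assumes g: "g \<in> borel_measurable M" and med: "is_median M g m"
    and cont: "isCont (\<lambda>t. prob {x \<in> space M. g x \<le> t}) m"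
  shows "prob {x \<in> space M. g x \<le> m} = 1/2"
proof -
  let ?F = "\<lambda>t. prob {x \<in> space M. g x \<le> t}"
  have "eventually (\<lambda>t. ?F t \<le> 1/2) (at_left m)"
  proof (rule eventually_at_leftI[of "m - 1"])
    fix t assume "t \<in> {m - 1<..<m}"
    then have "?F t \<le> prob (space M - {x \<in> space M. m \<le> g x})"
      using g by (intro finite_measure_mono) auto
    also have "\<dots> = 1 - prob {x \<in> space M. m \<le> g x}" using g by (intro prob_compl) simp
    also have "\<dots> \<le> 1/2" using med unfolding is_median_def by simp
    finally show "?F t \<le> 1/2" .
  qed simp
  moreover have "(?F \<longlongrightarrow> ?F m) (at_left m)"
    using cont filterlim_at_split isCont_def by blast
  ultimately have "?F m \<le> 1/2" by (intro tendsto_upperbound) auto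
  then show ?thesis using med unfolding is_median_def by simp
qed

lemma (in prob_space) prob_le_ge_excess_Markov:
  assumes "integrable M g" and "0 < c"
  shows "1 - (\<integral>x. max (g x - m) 0 \<partial>M) / c \<le> prob {x \<in> space M. g x \<le> m + c}"
proof -
  have g: "g \<in> borel_measurable M" using assms(1) by (rule borel_measurable_integrable)
  have "integrable M (\<lambda>x. max (g x - m) 0)" using assms(1) by (intro integrable_max) auto
  then have "prob {x \<in> space M. c \<le> max (g x - m) 0} \<le> (\<integral>x. max (g x - m) 0 \<partial>M) / c"
    using \<open>0 < c\<close> by (intro integral_Markov_inequality_measure) auto
  moreover have "{x \<in> space M. c \<le> max (g x - m) 0} = {x \<in> space M. m + c \<le> g x}"
    using \<open>0 < c\<close> by auto
  moreover have "1 - prob {x \<in> space M. m + c \<le> g x} \<le> prob {x \<in> space M. g x \<le> m + c}"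
  proof -
    have "1 - prob {x \<in> space M. m + c \<le> g x} = prob (space M - {x \<in> space M. m + c \<le> g x})"
      using g by (intro prob_compl[symmetric]) simp
    also have "\<dots> \<le> prob {x \<in> space M. g x \<le> m + c}"
      using g by (intro finite_measure_mono) auto
    finally show ?thesis .
  qed
  ultimately show ?thesis by simp
qed

lemma half_three_quarters_powr_ge:
  fixes l :: real
  assumes "0 \<le> l"
  shows "1/2 + l/8 \<le> (1/2) powr (1 - l) * (3/4) powr l"
proof -
  have ln: "1/4 \<le> ln (3/2 :: real)"
    using ln_le_minus_one[of "2/3 :: real"] ln_inverse[of "3/2 :: real"] by simp
  have "1 + l/4 \<le> 1 + l * ln (3/2)" using mult_left_mono[OF ln assms] by simp
  also have "\<dots> \<le> exp (l * ln (3/2))" by (rule exp_ge_add_one_self)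
  also have "\<dots> = (3/2) powr l" by (simp add: powr_def)
  finally have "1/2 + l/8 \<le> (1/2) * (3/2) powr l" by simp
  also have "\<dots> = (1/2) powr (1 - l) * ((1/2) powr l * (3/2) powr l)"
    using powr_add[of "1/2 :: real" "1 - l" l] by (simp add: algebra_simps)
  also have "\<dots> = (1/2) powr (1 - l) * (3/4) powr l"
    by (simp add: powr_mult[symmetric])
  finally show ?thesis .
qed

lemma log_concave_increment:
  fixes F :: "real \<Rightarrow> real"
  assumes lc: "\<And>a b t. 0 < t \<Longrightarrow> t < 1 \<Longrightarrow> 0 < F a \<Longrightarrow> 0 < F b \<Longrightarrow>
      F a powr t * F b powr (1 - t) \<le> F (t * a + (1 - t) * b)"
    and Fm: "F m = 1/2" and Fd: "3/4 \<le> F (m + d)" and h: "0 < h" "h < d"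
  shows "h / (8 * d) \<le> F (m + h) - F m"
proof -
  define l where "l = h / d"
  have l: "0 < l" "l < 1" using h by (auto simp: l_def)
  have "1/2 + l/8 \<le> (1/2) powr (1 - l) * (3/4) powr l"
    using l by (intro half_three_quarters_powr_ge) simp
  also have "\<dots> \<le> F m powr (1 - l) * F (m + d) powr (1 - (1 - l))"
    unfolding Fm using Fd l by (intro mult_left_mono) (auto intro: powr_mono2)
  also have "\<dots> \<le> F ((1 - l) * m + (1 - (1 - l)) * (m + d))"
    using Fm Fd l by (intro lc) auto
  also have "(1 - l) * m + (1 - (1 - l)) * (m + d) = m + h"
    using h by (simp add: l_def field_simps)
  finally show ?thesis using Fm h by (simp add: l_def)
qed

lemma has_real_derivative_ge_right_quotient:
  assumes "(F has_real_derivative f) (at x)"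
    and "eventually (\<lambda>h. c \<le> (F (x + h) - F x) / h) (at_right 0)"
  shows "c \<le> f"
proof -
  have "((\<lambda>h. (F (x + h) - F x) / h) \<longlongrightarrow> f) (at_right 0)"
    using assms(1) unfolding DERIV_def using filterlim_at_split by blast
  then show ?thesis using assms(2) by (intro tendsto_lowerbound) auto
qed

theorem lemma5p4:
  fixes \<mu> :: "'a::euclidean_space measure" and \<psi> :: "'a \<Rightarrow> real"
    and F :: "real \<Rightarrow> real" and m f :: real
  assumes "prob_space \<mu>"
    and "log_concave_measure \<mu>"
    and "convex_on UNIV \<psi>"
    and "integrable \<mu> \<psi>"
    and "\<And>t. F t = measure \<mu> {x \<in> space \<mu>. \<psi> x \<le> t}"
    and "is_median \<mu> \<psi> m"
    and "(F has_real_derivative f) (at m)"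
  shows "f \<ge> 1 / (32 * (\<integral>x. max (\<psi> x - m) 0 \<partial>\<mu>))"
proof -
  interpret prob_space \<mu> by fact
  have F_eq: "F = (\<lambda>t. prob {x \<in> space \<mu>. \<psi> x \<le> t})" by (rule ext) (fact assms(5))
  have "sets \<mu> = sets borel" using assms(2) unfolding log_concave_measure_def by blast
  then have space: "space \<mu> = UNIV" by (metis sets_eq_imp_space_eq space_borel)
  have meas: "\<psi> \<in> borel_measurable \<mu>" using assms(4) by (rule borel_measurable_integrable)
  have F_mono: "F a \<le> F b" if "a \<le> b" for a b
    unfolding F_eq using meas that by (intro finite_measure_mono) auto
  have Fm: "F m = 1/2"
    using cdf_at_median[OF meas assms(6)] DERIV_isCont[OF assms(7)] unfolding F_eq .
  define E where "E = (\<integral>x. max (\<psi> x - m) 0 \<partial>\<mu>)"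
  have "E \<ge> 0" unfolding E_def by (intro integral_nonneg_AE) auto
  show ?thesis
  proof (cases "E = 0")
    case True
    \<comment> \<open>the claimed bound is \<open>f \<ge> 0\<close> here, as \<open>1 / 0 = 0\<close>\<close>
    have "eventually (\<lambda>h. 0 \<le> (F (m + h) - F m) / h) (at_right 0)"
      using F_mono by (intro eventually_at_rightI[of 0 1]) simp_all
    then show ?thesis using has_real_derivative_ge_right_quotient[OF assms(7)] True E_def by simp
  next
    case False
    with \<open>E \<ge> 0\<close> have "E > 0" by simp
    have "3/4 \<le> F (m + 4 * E)"
      using prob_le_ge_excess_Markov[OF assms(4), of "4 * E" m] \<open>E > 0\<close> F_eq E_def by simp
    moreover note log_concave_sublevel_measure[OF finite_measure_axioms assms(2,3)]
    ultimately have "h / (8 * (4 * E)) \<le> F (m + h) - F m" if "0 < h" "h < 4 * E" for h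
      using that Fm by (intro log_concave_increment[where F = F]) (auto simp: F_eq space)
    then have "eventually (\<lambda>h. 1 / (32 * E) \<le> (F (m + h) - F m) / h) (at_right 0)"
      using \<open>E > 0\<close> by (intro eventually_at_rightI[of 0 "4 * E"]) (auto simp: field_simps)
    then show ?thesis using has_real_derivative_ge_right_quotient[OF assms(7)] E_def by simp
  qed
qed

end
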